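(* Let $d,N\ge 1$, let $V$ be a real invertible $d\times d$ matrix, let $\Lambda_{ni}\in\mathbb R$ ($n=1,\dots,N$, $i=1,\dots,d$), and set $M_n=V\,{\rm diag}(\Lambda_{n1},\dots,\Lambda_{nd})\,V^{-1}$ for $n=1,\dots,N$; let $\mathcal M_\circ=\{M_n\}_{n=1}^N$. Suppose that for every $i\neq i'$ in $\{1,\dots,d\}$ there exists $n\in\{1,\dots,N\}$ with $\Lambda_{ni}\neq\Lambda_{ni'}$. Then $\mathcal M_\circ$ admits exactly $2^d d!$ exact joint triangularizers.
   Context: All matrices are real. For a $d\times d$ matrix $A$, ${\rm low}(A)$ is its strictly lower-triangular part: $[{\rm low}(A)]_{ij}=A_{ij}$ if $i>j$ and $0$ otherwise. $\mathbb O(d)$ is the set of $d\times d$ orthogonal matrices. An exact joint triangularizer of $\mathcal M_\circ$ is a matrix $U_\circ\in\mathbb O(d)$ with ${\rm low}(U_\circ^TM_nU_\circ)=0$ for all $n=1,\dots,N$. *)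

theory Defs
  imports "Jordan_Normal_Form.Matrix"
begin

definition low :: "real mat \<Rightarrow> real mat" where
  "low A = mat (dim_row A) (dim_col A) (\<lambda>(i,j). if i > j then A $$ (i,j) else 0)"

definition orth_mat :: "nat \<Rightarrow> real mat \<Rightarrow> bool" where
  "orth_mat d U \<longleftrightarrow> U \<in> carrier_mat d d \<and> transpose_mat U * U = 1\<^sub>m d"

definition diag_of :: "nat \<Rightarrow> (nat \<Rightarrow> real) \<Rightarrow> real mat" where
  "diag_of d f = mat d d (\<lambda>(i,j). if i = j then f i else 0)"

definition exact_joint_triangularizer :: "nat \<Rightarrow> nat \<Rightarrow> (nat \<Rightarrow> real mat) \<Rightarrow> real mat \<Rightarrow> bool" where
  "exact_joint_triangularizer d N M U \<longleftrightarrow>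
     orth_mat d U \<and> (\<forall>n<N. low (transpose_mat U * M n * U) = 0\<^sub>m d d)"

end

theory Submission
  imports Defs "Jordan_Normal_Form.Determinant" "HOL-Library.FuncSet"
begin

text \<open>For orthogonal U let W = V^-1 U be its coordinate matrix in the eigenbasis; W is invertible
  and W (U^T M_n U) = D_n W with D_n = diag (\<Lambda>_n). If all U^T M_n U are upper triangular and
  row k of W starts in column f k, comparing the entries (k, f k) shows that \<Lambda>_nk is the
  (f k, f k) entry of U^T M_n U for every n, so separation of the joint eigenvalues makes f a
  permutation, and W vanishes to the left of the staircase given by f. Conversely, such a
  staircase makes P^T W upper triangular and invertible for the permutation matrix P of f, and
  U^T M_n U is the conjugate of a diagonal matrix by it, hence upper triangular.
  For fixed f the orthogonal staircase matrices are Q diag (\<plusminus>1), where Q comes from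
  Gram-Schmidt applied to the columns of V P, because an orthogonal upper triangular matrix is a
  diagonal sign matrix. Distinct f give disjoint classes, which yields d! 2^d triangularizers.\<close>

lemma index_mult_mat_sum:
  assumes "A \<in> carrier_mat n m" "B \<in> carrier_mat m p" "i < n" "j < p"
  shows "(A * B) $$ (i,j) = (\<Sum>k<m. A $$ (i,k) * B $$ (k,j))"
  using assms by (auto simp: scalar_prod_def lessThan_atLeast0 intro!: sum.cong)

lemma mult_carrier_mat_square: "A \<in> carrier_mat d d \<Longrightarrow> B \<in> carrier_mat d d \<Longrightarrow> A * B \<in> carrier_mat d d"
  by simp

lemma mult_cancel_left_inverse:
  fixes A B X :: "'a :: semiring_1 mat"
  assumes "A \<in> carrier_mat n m" "B \<in> carrier_mat m n" "A * B = 1\<^sub>m n" "X \<in> carrier_mat n p"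
  shows "A * (B * X) = X"
  using assms left_mult_one_mat[OF assms(4)] by (simp flip: assoc_mult_mat[of A n m B n X p])

lemma det_nonzero_of_right_inverse:
  fixes A B :: "'a :: comm_ring_1 mat"
  assumes "A \<in> carrier_mat n n" "B \<in> carrier_mat n n" "A * B = 1\<^sub>m n"
  shows "det A \<noteq> 0"
proof
  assume "det A = 0"
  hence "det (A * B) = 0" using det_mult[OF assms(1,2)] by simp
  thus False using assms(3) by simp
qed

lemma upper_triangular_diag_nonzero:
  fixes A :: "'a :: idom mat"
  assumes "A \<in> carrier_mat n n" "upper_triangular A" "det A \<noteq> 0" "i < n"
  shows "A $$ (i,i) \<noteq> 0"
  using assms upper_triangular_imp_det_eq_0_iff[OF assms(1,2)]
  by (auto simp: diag_mat_def)

lemma upper_triangular_right_factor: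
  fixes A B C :: "'a :: idom mat"
  assumes A: "A \<in> carrier_mat n n" and B: "B \<in> carrier_mat n n"
    and uA: "upper_triangular A" and dA: "\<And>i. i < n \<Longrightarrow> A $$ (i,i) \<noteq> 0"
    and uC: "upper_triangular C" and AB: "A * B = C"
  shows "upper_triangular B"
proof -
  have "B $$ (i,j) = 0" if "j < i" "i < n" for i j
    using that
  \<comment> \<open>back substitution, from the last row upwards\<close>
  proof (induct "n - i" arbitrary: i rule: less_induct)
    case less
    have "0 = (A * B) $$ (i,j)" using uC A B AB less by (auto simp: upper_triangular_def)
    also have "\<dots> = (\<Sum>k<n. A $$ (i,k) * B $$ (k,j))"
      using A B less by (intro index_mult_mat_sum[of A n n B n]) auto
    also have "\<dots> = (\<Sum>k<n. if k = i then A $$ (i,i) * B $$ (i,j) else 0)"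
    proof (rule sum.cong)
      fix k assume "k \<in> {..<n}"
      moreover have "A $$ (i,k) = 0" if "k < i" using that uA A less by (auto simp: upper_triangular_def)
      moreover have "B $$ (k,j) = 0" if "i < k" "k < n" using that less by (intro less(1)) auto
      ultimately show "A $$ (i,k) * B $$ (k,j) = (if k = i then A $$ (i,i) * B $$ (i,j) else 0)"
        by (cases k i rule: linorder_cases) auto
    qed simp
    also have "\<dots> = A $$ (i,i) * B $$ (i,j)" using less by simp
    finally show ?case using dA[OF less(3)] by simp
  qed
  thus ?thesis using B by (auto simp: upper_triangular_def)
qed

lemma low_eq_0_iff_upper_triangular:
  assumes "S \<in> carrier_mat d d"
  shows "low S = 0\<^sub>m d d \<longleftrightarrow> upper_triangular S"
proof
  assume low: "low S = 0\<^sub>m d d"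
  show "upper_triangular S" unfolding upper_triangular_def
  proof (intro allI impI)
    fix i j assume "i < dim_row S" "j < i"
    moreover have "low S $$ (i,j) = 0" using low calculation assms by simp
    ultimately show "S $$ (i,j) = 0" using assms unfolding low_def by auto
  qed
next
  assume "upper_triangular S"
  thus "low S = 0\<^sub>m d d" using assms unfolding low_def upper_triangular_def
    by (intro eq_matI) auto
qed

lemma diag_of_carrier [simp]: "diag_of d s \<in> carrier_mat d d"
  unfolding diag_of_def by simp

lemma transpose_diag_of [simp]: "transpose_mat (diag_of d s) = diag_of d s"
  unfolding diag_of_def by (intro eq_matI) auto

lemma index_mult_diag_of:
  assumes "X \<in> carrier_mat n d" "k < n" "j < d"
  shows "(X * diag_of d s) $$ (k,j) = X $$ (k,j) * s j"
proof -
  have "(X * diag_of d s) $$ (k,j) = (\<Sum>i<d. X $$ (k,i) * diag_of d s $$ (i,j))"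
    using assms by (intro index_mult_mat_sum[of _ n d _ d]) auto
  also have "\<dots> = (\<Sum>i<d. if i = j then X $$ (k,j) * s j else 0)"
    using assms unfolding diag_of_def by (intro sum.cong) auto
  finally show ?thesis using assms by simp
qed

lemma index_diag_of_mult:
  assumes "X \<in> carrier_mat d n" "k < d" "j < n"
  shows "(diag_of d s * X) $$ (k,j) = s k * X $$ (k,j)"
proof -
  have "(diag_of d s * X) $$ (k,j) = (\<Sum>i<d. diag_of d s $$ (k,i) * X $$ (i,j))"
    using assms by (intro index_mult_mat_sum[of _ d d _ n]) auto
  also have "\<dots> = (\<Sum>i<d. if i = k then s k * X $$ (k,j) else 0)"
    using assms unfolding diag_of_def by (intro sum.cong) auto
  finally show ?thesis using assms by simp
qed

lemma diag_of_mult_diag_of: "diag_of d s * diag_of d t = diag_of d (\<lambda>i. s i * t i)"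
proof (rule eq_matI)
  fix i j assume "i < dim_row (diag_of d (\<lambda>i. s i * t i))" "j < dim_col (diag_of d (\<lambda>i. s i * t i))"
  hence ij: "i < d" "j < d" by (auto simp: diag_of_def)
  show "(diag_of d s * diag_of d t) $$ (i,j) = diag_of d (\<lambda>i. s i * t i) $$ (i,j)"
    using index_diag_of_mult[OF diag_of_carrier ij, of s t] ij by (simp add: diag_of_def)
qed (auto simp: diag_of_def)

lemma orth_mat_carrier: "orth_mat d U \<Longrightarrow> U \<in> carrier_mat d d"
  unfolding orth_mat_def by simp

lemma orth_mat_right_inverse: "orth_mat d U \<Longrightarrow> U * transpose_mat U = 1\<^sub>m d"
  using mat_mult_left_right_inverse[of "transpose_mat U" d U] unfolding orth_mat_def by auto

lemma orth_mat_mult: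
  assumes U: "orth_mat d U" and W: "orth_mat d W"
  shows "orth_mat d (U * W)"
proof -
  have c: "U \<in> carrier_mat d d" "W \<in> carrier_mat d d"
    and UtU: "transpose_mat U * U = 1\<^sub>m d" and WtW: "transpose_mat W * W = 1\<^sub>m d"
    using U W unfolding orth_mat_def by auto
  have "transpose_mat (U * W) * (U * W) = transpose_mat W * (transpose_mat U * (U * W))"
    using c by (simp add: transpose_mult[of U d d W d] assoc_mult_mat[of _ d d _ d _ d])
  also have "transpose_mat U * (U * W) = W"
    using c UtU by (intro mult_cancel_left_inverse[of _ d d]) auto
  finally show ?thesis using c WtW unfolding orth_mat_def by simp
qed

lemma orth_mat_transpose:
  assumes "orth_mat d U"
  shows "orth_mat d (transpose_mat U)"
  using assms orth_mat_right_inverse[OF assms] unfolding orth_mat_def by simp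

definition signs :: "nat \<Rightarrow> (nat \<Rightarrow> real) set" where
  "signs d = PiE {..<d} (\<lambda>_. {-1, 1})"

lemma card_signs: "card (signs d) = 2 ^ d"
  unfolding signs_def by (simp add: card_PiE numeral_2_eq_2)

lemma orth_mat_diag_of_signs:
  assumes "s \<in> signs d"
  shows "orth_mat d (diag_of d s)"
proof -
  have "s i * s i = 1" if "i < d" for i
  proof -
    have "s i \<in> {-1, 1}" using assms that unfolding signs_def by auto
    thus ?thesis by auto
  qed
  hence "diag_of d (\<lambda>i. s i * s i) = 1\<^sub>m d"
    by (intro eq_matI) (auto simp: diag_of_def)
  thus ?thesis unfolding orth_mat_def by (simp add: diag_of_mult_diag_of)
qed

lemma orth_mat_upper_triangular_eq_diag_of_signs:
  assumes X: "orth_mat d X" and uX: "upper_triangular X"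
  shows "\<exists>s\<in>signs d. X = diag_of d s"
proof -
  have Xc: "X \<in> carrier_mat d d" and XtX: "transpose_mat X * X = 1\<^sub>m d"
    using X unfolding orth_mat_def by auto
  have XXt: "X * transpose_mat X = 1\<^sub>m d" by (rule orth_mat_right_inverse[OF X])
  have diag: "X $$ (i,i) \<noteq> 0" if "i < d" for i
    using upper_triangular_diag_nonzero[OF Xc uX det_nonzero_of_right_inverse[OF Xc _ XXt] that] Xc
    by simp
  have "upper_triangular (transpose_mat X)"
    by (rule upper_triangular_right_factor[OF Xc _ uX diag _ XXt]) (use Xc in \<open>auto simp: upper_triangular_def\<close>)
  hence offdiag: "X $$ (i,j) = 0" if "i < d" "j < d" "i \<noteq> j" for i j
    using uX Xc that unfolding upper_triangular_def by (cases i j rule: linorder_cases) auto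
  have square: "X $$ (i,i) * X $$ (i,i) = 1" if i: "i < d" for i
  proof -
    have "(transpose_mat X * X) $$ (i,i) = (\<Sum>k<d. X $$ (k,i) * X $$ (k,i))"
      using Xc i by (subst index_mult_mat_sum[of _ d d _ d]) auto
    also have "\<dots> = (\<Sum>k<d. if k = i then X $$ (i,i) * X $$ (i,i) else 0)"
      using offdiag i by (intro sum.cong) auto
    finally show ?thesis using XtX i by simp
  qed
  define s where "s = restrict (\<lambda>i. X $$ (i,i)) {..<d}"
  have "s \<in> signs d" unfolding signs_def s_def using square square_eq_1_iff by auto
  moreover have "X = diag_of d s"
    by (rule eq_matI) (use Xc offdiag in \<open>auto simp: diag_of_def s_def\<close>)
  ultimately show ?thesis by blast
qed

definition perm_mat :: "nat \<Rightarrow> (nat \<Rightarrow> nat) \<Rightarrow> real mat" where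
  "perm_mat d f = mat d d (\<lambda>(k,i). if f k = i then 1 else 0)"

lemma perm_mat_carrier [simp]: "perm_mat d f \<in> carrier_mat d d"
  unfolding perm_mat_def by simp

lemma index_perm_mat_mult:
  assumes f: "f permutes {..<d}" and X: "X \<in> carrier_mat d m" and k: "k < d" and j: "j < m"
  shows "(perm_mat d f * X) $$ (k,j) = X $$ (f k, j)"
proof -
  have fk: "f k < d" using permutes_in_image[OF f] k by auto
  have "(perm_mat d f * X) $$ (k,j) = (\<Sum>i<d. perm_mat d f $$ (k,i) * X $$ (i,j))"
    using X k j by (intro index_mult_mat_sum[of _ d d X m]) auto
  also have "\<dots> = (\<Sum>i<d. if i = f k then X $$ (i,j) else 0)"
    using k unfolding perm_mat_def by (intro sum.cong) auto
  finally show ?thesis using fk by simp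
qed

lemma orth_mat_perm_mat:
  assumes f: "f permutes {..<d}"
  shows "orth_mat d (perm_mat d f)"
proof -
  have "perm_mat d f * transpose_mat (perm_mat d f) = 1\<^sub>m d"
  proof (rule eq_matI)
    fix k l assume "k < dim_row (1\<^sub>m d :: real mat)" "l < dim_col (1\<^sub>m d :: real mat)"
    hence kl: "k < d" "l < d" by auto
    have "(perm_mat d f * transpose_mat (perm_mat d f)) $$ (k,l) = (if f l = f k then 1 else 0)"
      using kl permutes_in_image[OF f] by (subst index_perm_mat_mult[OF f]) (auto simp: perm_mat_def)
    also have "\<dots> = (1\<^sub>m d :: real mat) $$ (k,l)"
      using kl permutes_inj[OF f] by (auto simp: inj_eq)
    finally show "(perm_mat d f * transpose_mat (perm_mat d f)) $$ (k,l) = (1\<^sub>m d :: real mat) $$ (k,l)" .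
  qed (auto simp: perm_mat_def)
  thus ?thesis unfolding orth_mat_def
    using mat_mult_left_right_inverse[OF perm_mat_carrier, of "transpose_mat (perm_mat d f)"] by auto
qed

lemma diag_of_mult_perm_mat:
  assumes f: "f permutes {..<d}"
  shows "diag_of d s * perm_mat d f = perm_mat d f * diag_of d (s \<circ> inv_into UNIV f)"
proof (rule eq_matI)
  fix k i assume "k < dim_row (perm_mat d f * diag_of d (s \<circ> inv_into UNIV f))"
    "i < dim_col (perm_mat d f * diag_of d (s \<circ> inv_into UNIV f))"
  hence ki: "k < d" "i < d" by (auto simp: perm_mat_def diag_of_def)
  have "(diag_of d s * perm_mat d f) $$ (k,i) = s k * perm_mat d f $$ (k,i)"
    using ki by (simp add: index_diag_of_mult[OF perm_mat_carrier])
  also have "\<dots> = perm_mat d f $$ (k,i) * (s \<circ> inv_into UNIV f) i"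
    using ki permutes_inverses(2)[OF f, of k] by (auto simp: perm_mat_def)
  also have "\<dots> = (perm_mat d f * diag_of d (s \<circ> inv_into UNIV f)) $$ (k,i)"
    using ki by (simp add: index_mult_diag_of[OF perm_mat_carrier])
  finally show "(diag_of d s * perm_mat d f) $$ (k,i) = (perm_mat d f * diag_of d (s \<circ> inv_into UNIV f)) $$ (k,i)" .
qed (auto simp: perm_mat_def diag_of_def)

definition orthonormal_cols :: "nat \<Rightarrow> nat \<Rightarrow> real mat \<Rightarrow> bool" where
  "orthonormal_cols d k X \<longleftrightarrow>
     (\<forall>i<k. \<forall>j<k. (\<Sum>r<d. X $$ (r,i) * X $$ (r,j)) = (if i = j then 1 else 0))"

lemma orthonormal_cols_Suc:
  assumes on: "orthonormal_cols d k X"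
    and norm: "(\<Sum>r<d. X $$ (r,k) * X $$ (r,k)) = 1"
    and orth: "\<And>i. i < k \<Longrightarrow> (\<Sum>r<d. X $$ (r,i) * X $$ (r,k)) = 0"
  shows "orthonormal_cols d (Suc k) X"
  unfolding orthonormal_cols_def
proof (intro allI impI)
  fix i j assume "i < Suc k" "j < Suc k"
  then consider "i < k" "j < k" | "i < k" "j = k" | "i = k" "j < k" | "i = k" "j = k"
    by linarith
  thus "(\<Sum>r<d. X $$ (r,i) * X $$ (r,j)) = (if i = j then 1 else 0)"
  proof cases
    case 3
    have "(\<Sum>r<d. X $$ (r,i) * X $$ (r,j)) = (\<Sum>r<d. X $$ (r,j) * X $$ (r,k))"
      using 3 by (simp add: mult.commute)
    thus ?thesis using 3 orth by simp
  qed (use on norm orth in \<open>auto simp: orthonormal_cols_def\<close>)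
qed

lemma orth_mat_of_orthonormal_cols:
  assumes X: "X \<in> carrier_mat d d" and on: "orthonormal_cols d d X"
  shows "orth_mat d X"
proof -
  have "transpose_mat X * X = 1\<^sub>m d"
  proof (rule eq_matI)
    fix i j assume "i < dim_row (1\<^sub>m d :: real mat)" "j < dim_col (1\<^sub>m d :: real mat)"
    hence ij: "i < d" "j < d" by auto
    have "(transpose_mat X * X) $$ (i,j) = (\<Sum>r<d. X $$ (r,i) * X $$ (r,j))"
      using X ij by (subst index_mult_mat_sum[of _ d d _ d]) auto
    thus "(transpose_mat X * X) $$ (i,j) = (1\<^sub>m d :: real mat) $$ (i,j)"
      using on ij unfolding orthonormal_cols_def by simp
  qed (use X in auto)
  thus ?thesis using X unfolding orth_mat_def by simp
qed

lemma orthonormal_residual_orthogonal: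
  fixes u :: "nat \<Rightarrow> nat \<Rightarrow> real" and a :: "nat \<Rightarrow> real"
  assumes on: "\<And>i j. i < k \<Longrightarrow> j < k \<Longrightarrow> (\<Sum>r<d. u i r * u j r) = (if i = j then 1 else 0)"
    and i: "i < k"
  shows "(\<Sum>r<d. (a r - (\<Sum>j<k. (\<Sum>r'<d. a r' * u j r') * u j r)) * u i r) = 0"
proof -
  define \<alpha> where "\<alpha> j = (\<Sum>r<d. a r * u j r)" for j
  have "(\<Sum>r<d. (\<Sum>j<k. \<alpha> j * u j r) * u i r) = (\<Sum>j<k. \<Sum>r<d. \<alpha> j * (u j r * u i r))"
    by (subst sum.swap) (simp add: sum_distrib_right mult.assoc)
  also have "\<dots> = (\<Sum>j<k. \<alpha> j * (if j = i then 1 else 0))"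
    using on i by (intro sum.cong) (simp_all add: sum_distrib_left[symmetric])
  also have "\<dots> = \<alpha> i" using i by (simp add: if_distrib cong: if_cong)
  finally show ?thesis
    by (simp add: \<alpha>_def[symmetric] left_diff_distrib sum_subtractf)
qed

lemma gram_schmidt_step:
  fixes A B T :: "real mat"
  assumes A: "A \<in> carrier_mat d d" and B: "B \<in> carrier_mat d d" and BA: "B * A = 1\<^sub>m d"
    and T: "T \<in> carrier_mat d d" and uT: "upper_triangular T" and k: "k < d"
    and on: "orthonormal_cols d k (A * T)"
  shows "\<exists>T'. T' \<in> carrier_mat d d \<and> upper_triangular T' \<and> orthonormal_cols d (Suc k) (A * T')"
proof -
  define u where "u j r = (A * T) $$ (r,j)" for j r
  define \<alpha> where "\<alpha> j = (\<Sum>r<d. A $$ (r,k) * u j r)" for j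
  \<comment> \<open>column k of T becomes c, so column k of A T becomes the residual v of column k of A\<close>
  define c where "c i = (if i = k then 1 else 0) - (\<Sum>j<k. \<alpha> j * T $$ (i,j))" for i
  define v where "v = A *\<^sub>v vec d c"
  have u_sum: "u j r = (\<Sum>l<d. A $$ (r,l) * T $$ (l,j))" if "j < d" "r < d" for j r
    unfolding u_def using that A T by (intro index_mult_mat_sum) auto
  have v_sum: "v $ r = (\<Sum>l<d. A $$ (r,l) * c l)" if "r < d" for r
    unfolding v_def using A that by (auto simp: scalar_prod_def lessThan_atLeast0 intro!: sum.cong)
  have v_residual: "v $ r = A $$ (r,k) - (\<Sum>j<k. \<alpha> j * u j r)" if r: "r < d" for r
  proof -
    have "v $ r = (\<Sum>l<d. A $$ (r,l) * (if l = k then 1 else 0))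
        - (\<Sum>j<k. \<Sum>l<d. \<alpha> j * (A $$ (r,l) * T $$ (l,j)))"
      unfolding v_sum[OF r] c_def
      by (subst sum.swap) (simp add: right_diff_distrib sum_subtractf sum_distrib_left algebra_simps)
    also have "\<dots> = A $$ (r,k) - (\<Sum>j<k. \<alpha> j * u j r)"
      using k r u_sum by (simp add: sum_distrib_left[symmetric] if_distrib cong: if_cong)
    finally show ?thesis .
  qed
  have v_orth: "(\<Sum>r<d. v $ r * u i r) = 0" if "i < k" for i
  proof -
    have "(\<Sum>r<d. v $ r * u i r)
        = (\<Sum>r<d. (A $$ (r,k) - (\<Sum>j<k. (\<Sum>r'<d. A $$ (r',k) * u j r') * u j r)) * u i r)"
      using v_residual by (simp add: \<alpha>_def)
    also have "\<dots> = 0"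
      using on that by (intro orthonormal_residual_orthogonal) (auto simp: orthonormal_cols_def u_def)
    finally show ?thesis .
  qed
  have "vec d c \<noteq> 0\<^sub>v d"
  proof -
    have "T $$ (k,j) = 0" if "j < k" for j using uT T k that by (auto simp: upper_triangular_def)
    hence "c k = 1" unfolding c_def by simp
    thus ?thesis using k by (auto simp: vec_eq_iff)
  qed
  moreover have "B *\<^sub>v v = vec d c"
    unfolding v_def using A B BA by (simp flip: assoc_mult_mat_vec[of B d d A d])
  moreover have "B *\<^sub>v 0\<^sub>v d = 0\<^sub>v d" using B by auto
  ultimately have "v \<noteq> 0\<^sub>v d" by metis
  then obtain r0 where r0: "r0 < d" "v $ r0 \<noteq> 0" using A unfolding v_def by (auto simp: vec_eq_iff)
  define nv where "nv = sqrt (\<Sum>r<d. v $ r * v $ r)"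
  have "v $ r0 * v $ r0 \<le> (\<Sum>r<d. v $ r * v $ r)"
    using r0 by (intro member_le_sum) auto
  moreover have "v $ r0 * v $ r0 > 0" using r0 by (auto simp: zero_less_mult_iff linorder_neq_iff)
  ultimately have norm_pos: "(\<Sum>r<d. v $ r * v $ r) > 0" by linarith
  hence nv_sq: "nv * nv = (\<Sum>r<d. v $ r * v $ r)"
    unfolding nv_def by simp
  define T' where "T' = mat d d (\<lambda>(i,j). if j = k then c i / nv else T $$ (i,j))"
  have T': "T' \<in> carrier_mat d d" unfolding T'_def by simp
  have "c i = 0" if "k < i" "i < d" for i
  proof -
    have "T $$ (i,j) = 0" if "j < k" for j using uT T \<open>k < i\<close> \<open>i < d\<close> that
      by (auto simp: upper_triangular_def)
    thus ?thesis unfolding c_def using that by simp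
  qed
  hence uT': "upper_triangular T'"
    using uT T unfolding T'_def upper_triangular_def by auto
  have AT': "(A * T') $$ (r,j) = (if j = k then v $ r / nv else u j r)" if "r < d" "j < d" for r j
  proof -
    have "(A * T') $$ (r,j) = (\<Sum>l<d. A $$ (r,l) * (if j = k then c l / nv else T $$ (l,j)))"
      using that A T' by (subst index_mult_mat_sum[of _ d d _ d]) (auto simp: T'_def intro!: sum.cong)
    thus ?thesis using that u_sum v_sum by (auto simp: sum_divide_distrib)
  qed
  have "orthonormal_cols d (Suc k) (A * T')"
  proof (rule orthonormal_cols_Suc)
    show "orthonormal_cols d k (A * T')"
      using on k AT' unfolding orthonormal_cols_def u_def by auto
    have "(\<Sum>r<d. (A * T') $$ (r,k) * (A * T') $$ (r,k)) = (\<Sum>r<d. v $ r * v $ r) / (nv * nv)"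
      using AT' k by (simp add: sum_divide_distrib)
    thus "(\<Sum>r<d. (A * T') $$ (r,k) * (A * T') $$ (r,k)) = 1"
      using nv_sq norm_pos by simp
    fix i assume i: "i < k"
    have "(\<Sum>r<d. (A * T') $$ (r,i) * (A * T') $$ (r,k)) = (\<Sum>r<d. v $ r * u i r) / nv"
      using AT' i k by (simp add: sum_divide_distrib mult.commute)
    thus "(\<Sum>r<d. (A * T') $$ (r,i) * (A * T') $$ (r,k)) = 0"
      using v_orth[OF i] by simp
  qed
  thus ?thesis using T' uT' by blast
qed

lemma exists_upper_triangular_orthonormalizer:
  fixes A B :: "real mat"
  assumes A: "A \<in> carrier_mat d d" and B: "B \<in> carrier_mat d d" and BA: "B * A = 1\<^sub>m d"
  shows "\<exists>T. T \<in> carrier_mat d d \<and> upper_triangular T \<and> orth_mat d (A * T)"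
proof -
  have "\<exists>T. T \<in> carrier_mat d d \<and> upper_triangular T \<and> orthonormal_cols d k (A * T)"
    if "k \<le> d" for k
    using that
  proof (induction k)
    case 0
    have "upper_triangular (1\<^sub>m d :: real mat)" by (auto simp: upper_triangular_def)
    thus ?case unfolding orthonormal_cols_def by (intro exI[of _ "1\<^sub>m d"]) auto
  next
    case (Suc k)
    thus ?case using gram_schmidt_step[OF A B BA] by (metis Suc_le_lessD Suc_leD)
  qed
  then obtain T where "T \<in> carrier_mat d d" "upper_triangular T" "orthonormal_cols d d (A * T)"
    by blast
  thus ?thesis using A orth_mat_of_orthonormal_cols[of "A * T" d] by auto
qed

lemma row_nonzero_of_right_inverse:
  fixes W Y :: "real mat"
  assumes W: "W \<in> carrier_mat d d" and Y: "Y \<in> carrier_mat d d" and WY: "W * Y = 1\<^sub>m d"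
    and k: "k < d"
  shows "\<exists>j<d. W $$ (k,j) \<noteq> 0"
proof (rule ccontr)
  assume "\<not> ?thesis"
  hence "(W * Y) $$ (k,k) = 0" using W Y k by (subst index_mult_mat_sum[of _ d d _ d]) auto
  thus False using WY k by simp
qed

lemma eigenvalue_at_leading_entry:
  fixes W S :: "real mat"
  assumes W: "W \<in> carrier_mat d d" and S: "S \<in> carrier_mat d d" and uS: "upper_triangular S"
    and WS: "W * S = diag_of d e * W" and k: "k < d" and l: "l < d"
    and lead: "W $$ (k,l) \<noteq> 0" and before: "\<And>j. j < l \<Longrightarrow> W $$ (k,j) = 0"
  shows "e k = S $$ (l,l)"
proof -
  have "e k * W $$ (k,l) = (W * S) $$ (k,l)"
    using WS W k l by (simp add: index_diag_of_mult)
  also have "\<dots> = (\<Sum>j<d. W $$ (k,j) * S $$ (j,l))"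
    using W S k l by (rule index_mult_mat_sum)
  also have "\<dots> = (\<Sum>j<d. if j = l then W $$ (k,l) * S $$ (l,l) else 0)"
  proof (rule sum.cong)
    fix j assume "j \<in> {..<d}"
    moreover have "S $$ (j,l) = 0" if "l < j" "j < d" using uS S that by (auto simp: upper_triangular_def)
    ultimately show "W $$ (k,j) * S $$ (j,l) = (if j = l then W $$ (k,l) * S $$ (l,l) else 0)"
      using before by (cases j l rule: linorder_cases) auto
  qed simp
  also have "\<dots> = W $$ (k,l) * S $$ (l,l)" using l by simp
  finally show ?thesis using lead by simp
qed

lemma restrict_inj_on_permutes:
  fixes g :: "nat \<Rightarrow> nat"
  assumes inj: "inj_on g {..<d}" and range: "g ` {..<d} \<subseteq> {..<d}"
  shows "(\<lambda>k. if k < d then g k else k) permutes {..<d}"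
proof (rule bij_imp_permutes)
  have "g ` {..<d} = {..<d}" by (rule endo_inj_surj[OF _ range inj]) simp
  thus "bij_betw (\<lambda>k. if k < d then g k else k) {..<d} {..<d}"
    using inj unfolding bij_betw_def inj_on_def by (auto simp: image_def)
qed simp

locale separated_joint_diagonalization =
  fixes d N :: nat and V Vinv :: "real mat" and \<Lambda> :: "nat \<Rightarrow> nat \<Rightarrow> real"
    and M :: "nat \<Rightarrow> real mat"
  assumes V: "V \<in> carrier_mat d d" and Vinv: "Vinv \<in> carrier_mat d d"
    and Vinv_V: "Vinv * V = 1\<^sub>m d"
    and M_eq: "\<And>n. n < N \<Longrightarrow> M n = V * diag_of d (\<Lambda> n) * Vinv"
    and separated: "\<And>i i'. i < d \<Longrightarrow> i' < d \<Longrightarrow> i \<noteq> i' \<Longrightarrow> \<exists>n<N. \<Lambda> n i \<noteq> \<Lambda> n i'"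
begin

lemmas mat_square_simps = assoc_mult_mat[of _ d d _ d _ d] mult_carrier_mat_square[of _ d]
  left_mult_one_mat[of _ d d] right_mult_one_mat[of _ d d]

lemma M_carrier: "n < N \<Longrightarrow> M n \<in> carrier_mat d d"
  using M_eq V Vinv by (simp add: mat_square_simps)

lemma coords_intertwine:
  assumes U: "orth_mat d U" and n: "n < N"
  shows "(Vinv * U) * (transpose_mat U * M n * U) = diag_of d (\<Lambda> n) * (Vinv * U)"
proof -
  have Uc: "U \<in> carrier_mat d d" by (rule orth_mat_carrier[OF U])
  note Mc = M_carrier[OF n]
  have "(Vinv * U) * (transpose_mat U * M n * U) = Vinv * (U * (transpose_mat U * (M n * U)))"
    using Uc Mc Vinv by (simp add: mat_square_simps)
  also have "U * (transpose_mat U * (M n * U)) = M n * U"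
    using Uc Mc orth_mat_right_inverse[OF U] by (intro mult_cancel_left_inverse[of _ d d]) auto
  also have "Vinv * (M n * U) = Vinv * V * diag_of d (\<Lambda> n) * (Vinv * U)"
    using M_eq[OF n] Uc V Vinv by (simp add: mat_square_simps)
  also have "\<dots> = diag_of d (\<Lambda> n) * (Vinv * U)"
    using Vinv_V Uc Vinv by (simp add: mat_square_simps)
  finally show ?thesis .
qed

lemma coords_right_inverse:
  assumes U: "orth_mat d U"
  shows "(Vinv * U) * (transpose_mat U * V) = 1\<^sub>m d"
proof -
  have Uc: "U \<in> carrier_mat d d" by (rule orth_mat_carrier[OF U])
  have "(Vinv * U) * (transpose_mat U * V) = Vinv * (U * (transpose_mat U * V))"
    using Uc V Vinv by (simp add: mat_square_simps)
  also have "U * (transpose_mat U * V) = V"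
    using Uc V orth_mat_right_inverse[OF U] by (intro mult_cancel_left_inverse[of _ d d]) auto
  finally show ?thesis using Vinv_V by simp
qed

definition staircase :: "(nat \<Rightarrow> nat) \<Rightarrow> real mat \<Rightarrow> bool" where
  "staircase f U \<longleftrightarrow> (\<forall>k<d. \<forall>j<f k. (Vinv * U) $$ (k,j) = 0)"

text \<open>Moving row k of the coordinate matrix of U to position f k turns the staircase into
  an upper triangular matrix.\<close>

definition tri_coords :: "(nat \<Rightarrow> nat) \<Rightarrow> real mat \<Rightarrow> real mat" where
  "tri_coords f U = transpose_mat (perm_mat d f) * (Vinv * U)"

context
  fixes f U
  assumes f: "f permutes {..<d}" and U: "orth_mat d U"
begin

lemma tri_coords_carrier: "tri_coords f U \<in> carrier_mat d d"
  unfolding tri_coords_def using orth_mat_carrier[OF U] Vinv by (simp add: mat_square_simps)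

lemma perm_mat_mult_tri_coords: "perm_mat d f * tri_coords f U = Vinv * U"
  unfolding tri_coords_def using orth_mat_right_inverse[OF orth_mat_perm_mat[OF f]] orth_mat_carrier[OF U] Vinv
  by (intro mult_cancel_left_inverse[of _ d d]) (auto simp: mat_square_simps)

lemma index_tri_coords: "k < d \<Longrightarrow> j < d \<Longrightarrow> tri_coords f U $$ (f k, j) = (Vinv * U) $$ (k,j)"
  using index_perm_mat_mult[OF f tri_coords_carrier] perm_mat_mult_tri_coords by simp

lemma tri_coords_right_inverse: "tri_coords f U * (transpose_mat U * V * perm_mat d f) = 1\<^sub>m d"
proof -
  have "tri_coords f U * (transpose_mat U * V * perm_mat d f)
      = transpose_mat (perm_mat d f) * ((Vinv * U) * (transpose_mat U * V)) * perm_mat d f"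
    unfolding tri_coords_def using orth_mat_carrier[OF U] V Vinv by (simp add: mat_square_simps)
  thus ?thesis using coords_right_inverse[OF U] orth_mat_perm_mat[OF f]
    by (simp add: mat_square_simps orth_mat_def)
qed

lemma staircase_iff_upper_triangular: "staircase f U \<longleftrightarrow> upper_triangular (tri_coords f U)"
proof
  assume stair: "staircase f U"
  show "upper_triangular (tri_coords f U)" unfolding upper_triangular_def
  proof (intro allI impI)
    fix i j assume i: "i < dim_row (tri_coords f U)" and ji: "j < i"
    define k where "k = inv_into UNIV f i"
    have "i < d" using i tri_coords_carrier by simp
    hence k: "k < d" and fk: "f k = i"
      unfolding k_def using permutes_in_image[OF permutes_inv[OF f]] permutes_inverses[OF f] by auto
    have "tri_coords f U $$ (i,j) = (Vinv * U) $$ (k,j)"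
      using index_tri_coords[OF k] fk ji \<open>i < d\<close> by auto
    thus "tri_coords f U $$ (i,j) = 0" using stair k fk ji unfolding staircase_def by auto
  qed
next
  assume ut: "upper_triangular (tri_coords f U)"
  show "staircase f U" unfolding staircase_def
  proof (intro allI impI)
    fix k j assume k: "k < d" and j: "j < f k"
    have "f k < d" using permutes_in_image[OF f] k by simp
    thus "(Vinv * U) $$ (k,j) = 0"
      using index_tri_coords[OF k] ut tri_coords_carrier j unfolding upper_triangular_def by auto
  qed
qed

lemma staircase_tri_coords_diag_nonzero:
  assumes "staircase f U" "i < d"
  shows "tri_coords f U $$ (i,i) \<noteq> 0"
proof -
  have "det (tri_coords f U) \<noteq> 0"
    using tri_coords_carrier tri_coords_right_inverse orth_mat_carrier[OF U] V
    by (intro det_nonzero_of_right_inverse[of _ d]) (auto simp: mat_square_simps)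
  thus ?thesis using upper_triangular_diag_nonzero tri_coords_carrier assms
      staircase_iff_upper_triangular by blast
qed

lemma staircase_pivot_nonzero:
  assumes "staircase f U" "k < d"
  shows "(Vinv * U) $$ (k, f k) \<noteq> 0"
proof -
  have "f k < d" using permutes_in_image[OF f] assms(2) by simp
  thus ?thesis using staircase_tri_coords_diag_nonzero[OF assms(1)] index_tri_coords[OF assms(2)] by metis
qed

end

lemma staircase_perm_unique:
  assumes U: "orth_mat d U"
    and f: "f permutes {..<d}" "staircase f U" and g: "g permutes {..<d}" "staircase g U"
  shows "f = g"
proof
  fix k show "f k = g k"
  proof (cases "k < d")
    case True
    have "\<not> f k < g k" using staircase_pivot_nonzero[OF f(1) U f(2) True] g(2) True
      unfolding staircase_def by auto
    moreover have "\<not> g k < f k" using staircase_pivot_nonzero[OF g(1) U g(2) True] f(2) True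
      unfolding staircase_def by auto
    ultimately show ?thesis by simp
  next
    case False
    thus ?thesis using permutes_not_in[OF f(1)] permutes_not_in[OF g(1)] by auto
  qed
qed

lemma staircase_imp_triangularizer:
  assumes f: "f permutes {..<d}" and U: "orth_mat d U" and stair: "staircase f U"
  shows "exact_joint_triangularizer d N M U"
  unfolding exact_joint_triangularizer_def
proof (intro conjI allI impI)
  show "orth_mat d U" by fact
  fix n assume n: "n < N"
  define P where "P = perm_mat d f"
  define T where "T = tri_coords f U"
  define S where "S = transpose_mat U * M n * U"
  define D' where "D' = diag_of d (\<Lambda> n \<circ> inv_into UNIV f)"
  have Uc: "U \<in> carrier_mat d d" by (rule orth_mat_carrier[OF U])
  have T: "T \<in> carrier_mat d d" unfolding T_def by (rule tri_coords_carrier[OF f U])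
  have S: "S \<in> carrier_mat d d" unfolding S_def using Uc M_carrier[OF n] by (simp add: mat_square_simps)
  have uT: "upper_triangular T" using staircase_iff_upper_triangular[OF f U] stair T_def by simp
  have "P * (T * S) = P * (D' * T)"
  proof -
    have PT: "P * T = Vinv * U" unfolding P_def T_def by (rule perm_mat_mult_tri_coords[OF f U])
    have "P * (T * S) = (P * T) * S" using T S by (simp add: P_def mat_square_simps)
    also have "\<dots> = diag_of d (\<Lambda> n) * (P * T)"
      unfolding PT S_def by (rule coords_intertwine[OF U n])
    also have "\<dots> = (diag_of d (\<Lambda> n) * P) * T" using T by (simp add: P_def mat_square_simps)
    also have "\<dots> = P * (D' * T)"
      unfolding P_def D'_def diag_of_mult_perm_mat[OF f] using T by (simp add: mat_square_simps)
    finally show ?thesis .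
  qed
  moreover have "transpose_mat P * (P * X) = X" if "X \<in> carrier_mat d d" for X
    using orth_mat_perm_mat[OF f] that unfolding P_def orth_mat_def
    by (intro mult_cancel_left_inverse[of _ d d]) auto
  ultimately have "T * S = D' * T" using T S by (metis D'_def diag_of_carrier mult_carrier_mat_square)
  moreover have "upper_triangular (D' * T)" unfolding upper_triangular_def
  proof (intro allI impI)
    fix i j assume "i < dim_row (D' * T)" and ji: "j < i"
    hence i: "i < d" by (simp add: D'_def diag_of_def)
    show "(D' * T) $$ (i,j) = 0"
      using index_diag_of_mult[OF T i] uT T i ji unfolding D'_def upper_triangular_def by simp
  qed
  ultimately have "upper_triangular S"
    using upper_triangular_right_factor[OF T S uT] staircase_tri_coords_diag_nonzero[OF f U stair]
    unfolding T_def by blast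
  thus "low (transpose_mat U * M n * U) = 0\<^sub>m d d"
    using low_eq_0_iff_upper_triangular[OF S] unfolding S_def by simp
qed

lemma triangularizer_imp_staircase:
  assumes "exact_joint_triangularizer d N M U"
  obtains f where "f permutes {..<d}" "staircase f U"
proof -
  have U: "orth_mat d U" and low: "\<And>n. n < N \<Longrightarrow> low (transpose_mat U * M n * U) = 0\<^sub>m d d"
    using assms unfolding exact_joint_triangularizer_def by auto
  have Uc: "U \<in> carrier_mat d d" by (rule orth_mat_carrier[OF U])
  define W where "W = Vinv * U"
  define S where "S n = transpose_mat U * M n * U" for n
  have W: "W \<in> carrier_mat d d" unfolding W_def using Uc Vinv by (simp add: mat_square_simps)
  have S: "S n \<in> carrier_mat d d" if "n < N" for n
    unfolding S_def using Uc M_carrier[OF that] by (simp add: mat_square_simps)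
  have uS: "upper_triangular (S n)" if "n < N" for n
    using low_eq_0_iff_upper_triangular[OF S[OF that]] low[OF that] unfolding S_def by simp
  define lead where "lead k = (LEAST j. W $$ (k,j) \<noteq> 0)" for k
  have lead: "lead k < d" "W $$ (k, lead k) \<noteq> 0" "\<And>j. j < lead k \<Longrightarrow> W $$ (k,j) = 0"
    if k: "k < d" for k
  proof -
    obtain j0 where j0: "j0 < d" "W $$ (k,j0) \<noteq> 0"
      using row_nonzero_of_right_inverse[OF W _ coords_right_inverse[OF U, folded W_def] k]
        Uc V by (auto simp: mat_square_simps)
    show "W $$ (k, lead k) \<noteq> 0" unfolding lead_def by (rule LeastI[of _ j0]) (use j0 in auto)
    show "lead k < d" using Least_le[of _ j0] j0 unfolding lead_def by fastforce
    show "W $$ (k,j) = 0" if "j < lead k" for j using not_less_Least that unfolding lead_def by blast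
  qed
  have eigenvalue: "\<Lambda> n k = S n $$ (lead k, lead k)" if "k < d" "n < N" for k n
    using eigenvalue_at_leading_entry[OF W S uS _ _ _ lead(2,3)] coords_intertwine[OF U]
      lead(1) that unfolding W_def S_def by blast
  have "inj_on lead {..<d}"
  proof (rule inj_onI)
    fix a b assume "a \<in> {..<d}" "b \<in> {..<d}" "lead a = lead b"
    thus "a = b" using separated eigenvalue by (metis lessThan_iff)
  qed
  hence perm: "(\<lambda>k. if k < d then lead k else k) permutes {..<d}"
    using lead(1) by (intro restrict_inj_on_permutes) auto
  moreover have "staircase (\<lambda>k. if k < d then lead k else k) U"
    using lead(3) unfolding staircase_def W_def by auto
  ultimately show ?thesis using that by blast
qed

lemma orth_staircase_eq_sign_flips:
  assumes f: "f permutes {..<d}" and Q: "orth_mat d Q" and stairQ: "staircase f Q"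
  shows "{U. orth_mat d U \<and> staircase f U} = (\<lambda>s. Q * diag_of d s) ` signs d"
proof (intro equalityI subsetI)
  fix U assume "U \<in> {U. orth_mat d U \<and> staircase f U}"
  hence U: "orth_mat d U" and stairU: "staircase f U" by auto
  have Qc: "Q \<in> carrier_mat d d" and Uc: "U \<in> carrier_mat d d"
    using Q U unfolding orth_mat_def by auto
  define X where "X = transpose_mat Q * U"
  have X: "orth_mat d X" unfolding X_def by (rule orth_mat_mult[OF orth_mat_transpose[OF Q] U])
  have Xc: "X \<in> carrier_mat d d" by (rule orth_mat_carrier[OF X])
  have QX: "Q * X = U"
    unfolding X_def using Qc Uc orth_mat_right_inverse[OF Q]
    by (intro mult_cancel_left_inverse[of _ d d]) auto
  have "tri_coords f Q * X = tri_coords f U"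
    unfolding tri_coords_def QX[symmetric] using Qc Xc Vinv by (simp add: mat_square_simps)
  hence "upper_triangular X"
    using staircase_iff_upper_triangular[OF f Q] staircase_iff_upper_triangular[OF f U] stairQ stairU
    by (intro upper_triangular_right_factor[OF tri_coords_carrier[OF f Q] Xc])
      (use staircase_tri_coords_diag_nonzero[OF f Q stairQ] in auto)
  then obtain s where "s \<in> signs d" "X = diag_of d s"
    using orth_mat_upper_triangular_eq_diag_of_signs[OF X] by blast
  thus "U \<in> (\<lambda>s. Q * diag_of d s) ` signs d" using QX by blast
next
  fix U assume "U \<in> (\<lambda>s. Q * diag_of d s) ` signs d"
  then obtain s where s: "s \<in> signs d" and U: "U = Q * diag_of d s" by blast
  have Qc: "Q \<in> carrier_mat d d" by (rule orth_mat_carrier[OF Q])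
  have "staircase f U" unfolding staircase_def
  proof (intro allI impI)
    fix k j assume k: "k < d" and j: "j < f k"
    have "f k < d" using permutes_in_image[OF f] k by simp
    hence "(Vinv * U) $$ (k,j) = (Vinv * Q) $$ (k,j) * s j"
      unfolding U using index_mult_diag_of[of "Vinv * Q" d d k j s] Qc Vinv k j
      by (simp add: mat_square_simps)
    thus "(Vinv * U) $$ (k,j) = 0" using stairQ k j unfolding staircase_def by simp
  qed
  moreover have "orth_mat d U" unfolding U by (rule orth_mat_mult[OF Q orth_mat_diag_of_signs[OF s]])
  ultimately show "U \<in> {U. orth_mat d U \<and> staircase f U}" by simp
qed

lemma exists_orth_staircase:
  assumes f: "f permutes {..<d}"
  obtains Q where "orth_mat d Q" "staircase f Q"
proof -
  define P where "P = perm_mat d f"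
  have P: "P \<in> carrier_mat d d" and PtP: "transpose_mat P * P = 1\<^sub>m d"
    using orth_mat_perm_mat[OF f] unfolding P_def orth_mat_def by auto
  have "(transpose_mat P * Vinv) * (V * P) = 1\<^sub>m d"
    using P PtP V Vinv mult_cancel_left_inverse[OF Vinv V Vinv_V P] by (simp add: mat_square_simps)
  then obtain R where R: "R \<in> carrier_mat d d" "upper_triangular R" and Q: "orth_mat d (V * P * R)"
    using exists_upper_triangular_orthonormalizer[of "V * P" d "transpose_mat P * Vinv"] P V Vinv
    by (auto simp: mat_square_simps)
  have VQ: "Vinv * (V * P * R) = P * R"
    using V P R mult_cancel_left_inverse[OF Vinv V Vinv_V mult_carrier_mat_square[OF P R(1)]]
    by (simp add: mat_square_simps)
  have "staircase f (V * P * R)" unfolding staircase_def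
  proof (intro allI impI)
    fix k j assume k: "k < d" and j: "j < f k"
    have fk: "f k < d" using permutes_in_image[OF f] k by simp
    have "(P * R) $$ (k,j) = R $$ (f k, j)"
      using index_perm_mat_mult[OF f R(1) k] j fk unfolding P_def by simp
    also have "\<dots> = 0" using R fk j unfolding upper_triangular_def by auto
    finally show "(Vinv * (V * P * R)) $$ (k,j) = 0" unfolding VQ .
  qed
  thus ?thesis using that Q by blast
qed

lemma card_orth_staircase:
  assumes f: "f permutes {..<d}"
  shows "card {U. orth_mat d U \<and> staircase f U} = 2 ^ d"
proof -
  obtain Q where Q: "orth_mat d Q" "staircase f Q" using exists_orth_staircase[OF f] by blast
  have Qc: "Q \<in> carrier_mat d d" and QtQ: "transpose_mat Q * Q = 1\<^sub>m d"
    using Q unfolding orth_mat_def by auto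
  have "inj_on (\<lambda>s. Q * diag_of d s) (signs d)"
  proof (rule inj_onI)
    fix s t assume s: "s \<in> signs d" and t: "t \<in> signs d" and eq: "Q * diag_of d s = Q * diag_of d t"
    have st: "diag_of d s = diag_of d t"
      using mult_cancel_left_inverse[OF _ Qc QtQ diag_of_carrier, of s] eq
        mult_cancel_left_inverse[OF _ Qc QtQ diag_of_carrier, of t] Qc by simp
    have "s i = t i" if "i < d" for i
      using that arg_cong[OF st, of "\<lambda>D. D $$ (i,i)"] by (simp add: diag_of_def)
    thus "s = t" using s t unfolding signs_def by (auto intro: PiE_ext)
  qed
  thus ?thesis
    unfolding orth_staircase_eq_sign_flips[OF f Q] by (simp add: card_image card_signs)
qed

lemma triangularizers_eq_Union_staircase:
  "{U. exact_joint_triangularizer d N M U}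
     = (\<Union>f\<in>{f. f permutes {..<d}}. {U. orth_mat d U \<and> staircase f U})"
proof (intro equalityI subsetI)
  fix U assume U: "U \<in> {U. exact_joint_triangularizer d N M U}"
  then obtain f where "f permutes {..<d}" "staircase f U"
    using triangularizer_imp_staircase by blast
  thus "U \<in> (\<Union>f\<in>{f. f permutes {..<d}}. {U. orth_mat d U \<and> staircase f U})"
    using U unfolding exact_joint_triangularizer_def by blast
qed (auto intro: staircase_imp_triangularizer)

end

theorem lemma1:
  fixes d N :: nat and V Vinv :: "real mat" and \<Lambda> :: "nat \<Rightarrow> nat \<Rightarrow> real"
    and M :: "nat \<Rightarrow> real mat"
  assumes "d \<ge> 1" and "N \<ge> 1"
    and "V \<in> carrier_mat d d" and "Vinv \<in> carrier_mat d d"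
    and "V * Vinv = 1\<^sub>m d" and "Vinv * V = 1\<^sub>m d"
    and "\<And>n. n < N \<Longrightarrow> M n = V * diag_of d (\<Lambda> n) * Vinv"
    and "\<And>i i'. i < d \<Longrightarrow> i' < d \<Longrightarrow> i \<noteq> i' \<Longrightarrow> \<exists>n<N. \<Lambda> n i \<noteq> \<Lambda> n i'"
  shows "card {U. exact_joint_triangularizer d N M U} = 2 ^ d * fact d"
proof -
  interpret separated_joint_diagonalization d N V Vinv \<Lambda> M
    by unfold_locales (use assms in auto)
  define Perms where "Perms = {f. f permutes {..<d}}"
  define G where "G f = {U. orth_mat d U \<and> staircase f U}" for f
  have card_G: "card (G f) = 2 ^ d" if "f \<in> Perms" for f
    using card_orth_staircase that unfolding Perms_def G_def by simp
  have "card {U. exact_joint_triangularizer d N M U} = card (\<Union>f\<in>Perms. G f)"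
    unfolding triangularizers_eq_Union_staircase Perms_def G_def ..
  also have "\<dots> = (\<Sum>f\<in>Perms. card (G f))"
  proof (rule card_UN_disjoint)
    show "finite Perms" unfolding Perms_def by (rule finite_permutations) simp
    show "\<forall>f\<in>Perms. finite (G f)" using card_G by (intro ballI card_ge_0_finite) simp
    show "\<forall>f\<in>Perms. \<forall>g\<in>Perms. f \<noteq> g \<longrightarrow> G f \<inter> G g = {}"
      using staircase_perm_unique unfolding Perms_def G_def by blast
  qed
  also have "\<dots> = fact d * 2 ^ d"
    using card_G card_permutations[of "{..<d}" d] unfolding Perms_def by simp
  finally show ?thesis by simp
qed

end
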